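(* Given a positive integer $k$ and an integer $q$ with $|q|\le 2^k$, there is a connected finite simple graph $G$ with $\phi_3(G)=k$ and $I(G;-1)=q$.
   Context: For a finite simple graph $G$, the independence polynomial is $I(G;x)=\sum_{k\ge 0} i_k(G)x^k$, where $i_k(G)$ is the number of independent sets of $G$ of size $k$ (with $i_0(G)=1$, counting the empty set). A $\tilde{3}$-cycle is a cycle whose length is divisible by $3$. A graph is called ternary if it contains no induced $\tilde{3}$-cycle. A set $D\subseteq V(G)$ is a $\tilde{3}$-decycling set of $G$ if $G-D$ is ternary. The ternary decycling number $\phi_3(G)$ is the minimum size of a $\tilde{3}$-decycling set of $G$. *)

theory Defs
  imports Main
begin

definition simple_graph :: "'a set \<Rightarrow> ('a \<Rightarrow> 'a \<Rightarrow> bool) \<Rightarrow> bool" where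
  "simple_graph V E \<longleftrightarrow> finite V \<and> (\<forall>x y. E x y \<longrightarrow> x \<in> V \<and> y \<in> V)
     \<and> (\<forall>x y. E x y \<longrightarrow> E y x) \<and> (\<forall>x. \<not> E x x)"

definition connected_graph :: "'a set \<Rightarrow> ('a \<Rightarrow> 'a \<Rightarrow> bool) \<Rightarrow> bool" where
  "connected_graph V E \<longleftrightarrow> V \<noteq> {} \<and>
     (\<forall>x\<in>V. \<forall>y\<in>V. (x, y) \<in> {(u, v). u \<in> V \<and> v \<in> V \<and> E u v}\<^sup>*)"

definition independent_set :: "'a set \<Rightarrow> ('a \<Rightarrow> 'a \<Rightarrow> bool) \<Rightarrow> 'a set \<Rightarrow> bool" where
  "independent_set V E S \<longleftrightarrow> S \<subseteq> V \<and> (\<forall>x\<in>S. \<forall>y\<in>S. \<not> E x y)"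

definition indep_poly :: "'a set \<Rightarrow> ('a \<Rightarrow> 'a \<Rightarrow> bool) \<Rightarrow> 'b::comm_ring_1 \<Rightarrow> 'b" where
  "indep_poly V E x = (\<Sum>S\<in>{S. independent_set V E S}. x ^ card S)"

definition induced_cycle :: "'a set \<Rightarrow> ('a \<Rightarrow> 'a \<Rightarrow> bool) \<Rightarrow> 'a list \<Rightarrow> bool" where
  "induced_cycle V E vs \<longleftrightarrow> length vs \<ge> 3 \<and> distinct vs \<and> set vs \<subseteq> V \<and>
     (\<forall>i<length vs. \<forall>j<length vs.
        E (vs ! i) (vs ! j) \<longleftrightarrow> (j = Suc i mod length vs \<or> i = Suc j mod length vs))"

definition ternary :: "'a set \<Rightarrow> ('a \<Rightarrow> 'a \<Rightarrow> bool) \<Rightarrow> bool" where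
  "ternary V E \<longleftrightarrow> \<not> (\<exists>vs. induced_cycle V E vs \<and> 3 dvd length vs)"

definition decycling_set3 :: "'a set \<Rightarrow> ('a \<Rightarrow> 'a \<Rightarrow> bool) \<Rightarrow> 'a set \<Rightarrow> bool" where
  "decycling_set3 V E D \<longleftrightarrow> D \<subseteq> V \<and> ternary (V - D) E"

definition phi3 :: "'a set \<Rightarrow> ('a \<Rightarrow> 'a \<Rightarrow> bool) \<Rightarrow> nat" where
  "phi3 V E = (LEAST k. \<exists>D. decycling_set3 V E D \<and> card D = k)"

end

theory Submission
  imports Defs
begin

(* Track a rooted graph (G, p) by the pair (Q, P) = (I(G;-1), I(G - p;-1)). Gluing a rooted
   gadget (H, i) with values (R, R') by the single edge p i gives I = P R + (Q - P) R'
   (delete p and factor over the two sides). A pendant vertex maps (Q, P) to (Q - P, Q),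
   a triangle to (-P - Q, -2P) and a paw to (P - 2Q, -P); these generate negation,
   doubling and (-k, -1) |-> (2k - 1, 1), so every q with 1 <= q <= 2^t is reached using
   t triangle or paw gadgets. Their triangles are vertex-disjoint, so phi3 >= t, while
   deleting one vertex from each leaves a graph in which every vertex has at most one
   smaller neighbour, which has no cycle at all, so phi3 <= t. *)

lemma finite_independent_sets: "finite V \<Longrightarrow> finite {S. independent_set V E S}"
  by (rule finite_subset[of _ "Pow V"]) (auto simp: independent_set_def)

lemma indep_poly_empty: "indep_poly {} E x = 1"
proof -
  have "{S. independent_set {} E S} = {{}}"
    by (auto simp: independent_set_def)
  then show ?thesis
    by (simp add: indep_poly_def)
qed

lemma indep_poly_cong:
  assumes "\<And>u v. u \<in> V \<Longrightarrow> v \<in> V \<Longrightarrow> E u v = F u v"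
  shows "indep_poly V E x = indep_poly V F x"
proof -
  have "independent_set V E S = independent_set V F S" for S
    using assms unfolding independent_set_def by blast
  then show ?thesis
    by (simp add: indep_poly_def)
qed

lemma indep_poly_delete_vertex:
  assumes "finite V" "v \<in> V" "symp E" "irreflp E"
  shows "indep_poly V E x
           = indep_poly (V - {v}) E x + x * indep_poly {u \<in> V. u \<noteq> v \<and> \<not> E v u} E x"
proof -
  let ?N = "{u \<in> V. u \<noteq> v \<and> \<not> E v u}"
  let ?\<I> = "{S. independent_set V E S}"
  have split: "?\<I> = {S. independent_set (V - {v}) E S} \<union> {S \<in> ?\<I>. v \<in> S}"
    by (auto simp: independent_set_def)
  have "(\<Sum>S | independent_set ?N E S. x * x ^ card S) = (\<Sum>S | S \<in> ?\<I> \<and> v \<in> S. x ^ card S)"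
  proof (rule sum.reindex_bij_witness[of _ "\<lambda>S. S - {v}" "insert v"])
    fix S assume "S \<in> {S. independent_set ?N E S}"
    then have S: "S \<subseteq> V - {v}" "\<forall>u\<in>S. \<not> E v u" "\<forall>u\<in>S. \<forall>w\<in>S. \<not> E u w"
      by (auto simp: independent_set_def)
    then have "finite S" "v \<notin> S"
      using assms(1) finite_subset by blast+
    then show "x ^ card (insert v S) = x * x ^ card S" "insert v S - {v} = S"
      by simp_all
    show "insert v S \<in> {S \<in> ?\<I>. v \<in> S}"
      using S assms(2-4) unfolding independent_set_def symp_def irreflp_def by blast
  next
    fix S assume "S \<in> {S \<in> ?\<I>. v \<in> S}"
    then show "insert v (S - {v}) = S" "S - {v} \<in> {S. independent_set ?N E S}"
      by (auto simp: independent_set_def)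
  qed
  have "indep_poly V E x
          = (\<Sum>S \<in> {S. independent_set (V - {v}) E S} \<union> {S \<in> ?\<I>. v \<in> S}. x ^ card S)"
    unfolding indep_poly_def by (rule sum.cong[OF split refl])
  also have "\<dots> = indep_poly (V - {v}) E x + (\<Sum>S | S \<in> ?\<I> \<and> v \<in> S. x ^ card S)"
    unfolding indep_poly_def using assms(1)
    by (intro sum.union_disjoint) (auto simp: finite_independent_sets independent_set_def)
  finally show ?thesis
    by (simp add: indep_poly_def sum_distrib_left \<open>(\<Sum>S | independent_set ?N E S. _) = _\<close>)
qed

lemma indep_poly_Un:
  assumes "finite A" "finite B" "A \<inter> B = {}"
    and "\<And>a b. a \<in> A \<Longrightarrow> b \<in> B \<Longrightarrow> \<not> E a b \<and> \<not> E b a"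
  shows "indep_poly (A \<union> B) E x = indep_poly A E x * indep_poly B E x"
proof -
  have "indep_poly A E x * indep_poly B E x
          = (\<Sum>(S, T) \<in> {S. independent_set A E S} \<times> {T. independent_set B E T}. x ^ card S * x ^ card T)"
    by (simp add: indep_poly_def sum_product sum.cartesian_product)
  also have "\<dots> = indep_poly (A \<union> B) E x"
    unfolding indep_poly_def
  proof (rule sum.reindex_bij_witness[of _ "\<lambda>S. (S \<inter> A, S \<inter> B)" "\<lambda>(S, T). S \<union> T"])
    fix U assume "U \<in> {S. independent_set A E S} \<times> {T. independent_set B E T}"
    then obtain S T where U: "U = (S, T)" "S \<subseteq> A" "T \<subseteq> B" "independent_set A E S" "independent_set B E T"
      by (auto simp: independent_set_def)
    then have "finite S" "finite T" "S \<inter> T = {}"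
      using assms(1-3) finite_subset by blast+
    then show "x ^ card ((\<lambda>(S, T). S \<union> T) U) = (case U of (S, T) \<Rightarrow> x ^ card S * x ^ card T)"
      by (simp add: U card_Un_disjoint power_add)
    show "(\<lambda>(S, T). S \<union> T) U \<in> {S. independent_set (A \<union> B) E S}"
      using U assms(4) unfolding independent_set_def by blast
    show "(\<lambda>S. (S \<inter> A, S \<inter> B)) ((\<lambda>(S, T). S \<union> T) U) = U"
      using U assms(3) by auto
  qed (auto simp: independent_set_def)
  finally show ?thesis ..
qed

lemma indep_poly_clique:
  assumes "finite B" "irreflp E" "\<And>a b. a \<in> B \<Longrightarrow> b \<in> B \<Longrightarrow> a \<noteq> b \<Longrightarrow> E a b"
  shows "indep_poly B E x = 1 + of_nat (card B) * x"
proof -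
  have independent_sets: "{S. independent_set B E S} = insert {} ((\<lambda>b. {b}) ` B)"
  proof (intro subset_antisym subsetI)
    fix S assume "S \<in> {S. independent_set B E S}"
    then have "S \<subseteq> B" "\<forall>a\<in>S. \<forall>b\<in>S. \<not> E a b"
      by (simp_all add: independent_set_def)
    then have "a = b" if "a \<in> S" "b \<in> S" for a b
      using assms(3) that by blast
    with \<open>S \<subseteq> B\<close> have "S = {} \<or> (\<exists>b\<in>B. S = {b})"
      by blast
    then show "S \<in> insert {} ((\<lambda>b. {b}) ` B)"
      by blast
  qed (use assms(2) in \<open>auto simp: independent_set_def irreflp_def\<close>)
  have "indep_poly B E x = 1 + (\<Sum>S \<in> (\<lambda>b. {b}) ` B. x ^ card S)"
    unfolding indep_poly_def independent_sets using assms(1) by (subst sum.insert) auto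
  also have "\<dots> = 1 + of_nat (card B) * x"
    by (subst sum.reindex) (auto simp: inj_on_def)
  finally show ?thesis .
qed

lemma indep_poly_Un_bridge:
  assumes "finite A" "finite B" "A \<inter> B = {}" "p \<in> A" "i \<in> B" "symp E" "irreflp E"
    and cross: "\<And>a b. a \<in> A \<Longrightarrow> b \<in> B \<Longrightarrow> E a b \<longleftrightarrow> a = p \<and> b = i"
  shows "indep_poly (A \<union> B) E x
           = indep_poly (A - {p}) E x * indep_poly B E x
             + (indep_poly A E x - indep_poly (A - {p}) E x) * indep_poly (B - {i}) E x"
proof -
  let ?N = "\<lambda>V. {u \<in> V. u \<noteq> p \<and> \<not> E p u}"
  have no_cross: "\<not> E a b \<and> \<not> E b a" if "a \<in> A" "b \<in> B" "a \<noteq> p \<or> b \<noteq> i" for a b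
    using cross[OF that(1,2)] that \<open>symp E\<close> by (auto dest: sympD)
  have "A \<union> B - {p} = (A - {p}) \<union> B" "?N (A \<union> B) = ?N A \<union> (B - {i})"
    using assms(3-5) cross by auto
  moreover have "indep_poly ((A - {p}) \<union> B) E x = indep_poly (A - {p}) E x * indep_poly B E x"
    using assms(1-3) no_cross by (intro indep_poly_Un) auto
  moreover have "indep_poly (?N A \<union> (B - {i})) E x = indep_poly (?N A) E x * indep_poly (B - {i}) E x"
    using assms(1-3) no_cross by (intro indep_poly_Un) auto
  moreover have "indep_poly A E x = indep_poly (A - {p}) E x + x * indep_poly (?N A) E x"
    using assms by (intro indep_poly_delete_vertex)
  moreover have "indep_poly (A \<union> B) E x = indep_poly (A \<union> B - {p}) E x + x * indep_poly (?N (A \<union> B)) E x"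
    using assms by (intro indep_poly_delete_vertex) auto
  ultimately show ?thesis
    by (simp add: algebra_simps)
qed

definition join_by_edge :: "('a \<Rightarrow> 'a \<Rightarrow> bool) \<Rightarrow> ('a \<Rightarrow> 'a \<Rightarrow> bool) \<Rightarrow> 'a \<Rightarrow> 'a \<Rightarrow> 'a \<Rightarrow> 'a \<Rightarrow> bool" where
  "join_by_edge E F p i x y \<longleftrightarrow> E x y \<or> F x y \<or> (x = p \<and> y = i) \<or> (x = i \<and> y = p)"

definition complete_graph_on :: "'a set \<Rightarrow> 'a \<Rightarrow> 'a \<Rightarrow> bool" where
  "complete_graph_on S x y \<longleftrightarrow> x \<in> S \<and> y \<in> S \<and> x \<noteq> y"

lemma simple_graph_symp_irreflp: "simple_graph V E \<Longrightarrow> symp E \<and> irreflp E"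
  by (auto simp: simple_graph_def symp_def irreflp_def)

lemma simple_graph_join_by_edge:
  assumes "simple_graph A E" "simple_graph B F" "A \<inter> B = {}" "p \<in> A" "i \<in> B"
  shows "simple_graph (A \<union> B) (join_by_edge E F p i)"
  using assms unfolding simple_graph_def join_by_edge_def by (intro conjI allI impI) auto

lemma connected_graph_join_by_edge:
  assumes "connected_graph A E" "connected_graph B F" "p \<in> A" "i \<in> B"
  shows "connected_graph (A \<union> B) (join_by_edge E F p i)"
proof -
  let ?R = "{(u, v). u \<in> A \<union> B \<and> v \<in> A \<union> B \<and> join_by_edge E F p i u v}"
  have "{(u, v). u \<in> A \<and> v \<in> A \<and> E u v} \<subseteq> ?R" "{(u, v). u \<in> B \<and> v \<in> B \<and> F u v} \<subseteq> ?R"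
    by (auto simp: join_by_edge_def)
  then have "(u, v) \<in> ?R\<^sup>*" if "u \<in> A \<and> v \<in> A \<or> u \<in> B \<and> v \<in> B" for u v
    using assms(1,2) that unfolding connected_graph_def by (meson rtrancl_mono subsetD)
  moreover have "(p, i) \<in> ?R\<^sup>*" "(i, p) \<in> ?R\<^sup>*"
    using assms(3,4) by (auto simp: join_by_edge_def)
  ultimately have "(u, p) \<in> ?R\<^sup>* \<and> (p, u) \<in> ?R\<^sup>*" if "u \<in> A \<union> B" for u
    using that assms(3,4) by (auto intro: rtrancl_trans)
  then have "(u, v) \<in> ?R\<^sup>*" if "u \<in> A \<union> B" "v \<in> A \<union> B" for u v
    using that by (meson rtrancl_trans)
  then show ?thesis
    using assms(1) unfolding connected_graph_def by blast
qed

lemma simple_graph_complete_graph_on: "finite S \<Longrightarrow> simple_graph S (complete_graph_on S)"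
  by (auto simp: simple_graph_def complete_graph_on_def)

lemma connected_graph_complete_graph_on:
  assumes "S \<noteq> {}" shows "connected_graph S (complete_graph_on S)"
proof -
  have "(u, v) \<in> {(u, v). u \<in> S \<and> v \<in> S \<and> complete_graph_on S u v}\<^sup>*" if "u \<in> S" "v \<in> S" for u v
    using that by (cases "u = v") (auto simp: complete_graph_on_def)
  with assms show ?thesis
    by (simp add: connected_graph_def)
qed

lemma indep_poly_complete_graph_on:
  "finite S \<Longrightarrow> indep_poly S (complete_graph_on S) x = 1 + of_nat (card S) * x"
  by (rule indep_poly_clique) (auto simp: complete_graph_on_def irreflp_def)

definition triangle :: "('a \<Rightarrow> 'a \<Rightarrow> bool) \<Rightarrow> 'a set \<Rightarrow> bool" where
  "triangle E T \<longleftrightarrow> card T = 3 \<and> (\<forall>x\<in>T. \<forall>y\<in>T. x \<noteq> y \<longrightarrow> E x y)"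

definition has_disjoint_triangles :: "'a set \<Rightarrow> ('a \<Rightarrow> 'a \<Rightarrow> bool) \<Rightarrow> nat \<Rightarrow> bool" where
  "has_disjoint_triangles V E t \<longleftrightarrow>
     (\<exists>\<T>. finite \<T> \<and> card \<T> = t \<and> pairwise disjnt \<T> \<and> (\<forall>T\<in>\<T>. T \<subseteq> V \<and> triangle E T))"

definition at_most_one_lower_neighbour :: "'a::linorder set \<Rightarrow> ('a \<Rightarrow> 'a \<Rightarrow> bool) \<Rightarrow> bool" where
  "at_most_one_lower_neighbour W E \<longleftrightarrow>
     (\<forall>v\<in>W. \<forall>u\<in>W. \<forall>w\<in>W. E v u \<longrightarrow> E v w \<longrightarrow> u < v \<longrightarrow> w < v \<longrightarrow> u = w)"

lemma triangle_not_ternary: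
  assumes "triangle E T" "T \<subseteq> W" "irreflp E"
  shows "\<not> ternary W E"
proof -
  obtain a b c where T: "T = {a, b, c}" "a \<noteq> b" "b \<noteq> c" "a \<noteq> c"
    using assms(1) by (auto simp: triangle_def card_3_iff)
  define vs where "vs = [a, b, c]"
  have "distinct vs" "set vs = T" "length vs = 3"
    using T by (simp_all add: vs_def)
  have "E (vs ! i) (vs ! j) \<longleftrightarrow> j = Suc i mod 3 \<or> i = Suc j mod 3" if "i < 3" "j < 3" for i j
  proof -
    have "E (vs ! i) (vs ! j) \<longleftrightarrow> vs ! i \<noteq> vs ! j"
      using assms(1,3) that nth_mem[of i vs] nth_mem[of j vs] \<open>set vs = T\<close> \<open>length vs = 3\<close>
      by (auto simp: triangle_def irreflp_def)
    also have "\<dots> \<longleftrightarrow> i \<noteq> j"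
      using \<open>distinct vs\<close> \<open>length vs = 3\<close> that by (simp add: nth_eq_iff_index_eq)
    also have "\<dots> \<longleftrightarrow> j = Suc i mod 3 \<or> i = Suc j mod 3"
      using that by presburger
    finally show ?thesis .
  qed
  then have "induced_cycle W E vs"
    using \<open>distinct vs\<close> \<open>set vs = T\<close> \<open>length vs = 3\<close> assms(2) by (simp add: induced_cycle_def)
  with \<open>length vs = 3\<close> show ?thesis
    by (auto simp: ternary_def)
qed

lemma no_induced_cycle_if_at_most_one_lower_neighbour:
  assumes "at_most_one_lower_neighbour W E"
  shows "\<not> induced_cycle W E vs"
  \<comment> \<open>The largest vertex of an induced cycle has two smaller neighbours on it.\<close>
proof
  assume cycle: "induced_cycle W E vs"
  define n where "n = length vs"
  have n: "3 \<le> n" and "distinct vs" "set vs \<subseteq> W"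
    and adj: "\<And>i j. i < n \<Longrightarrow> j < n \<Longrightarrow> E (vs ! i) (vs ! j) \<longleftrightarrow> j = Suc i mod n \<or> i = Suc j mod n"
    using cycle by (auto simp: induced_cycle_def n_def)
  have "Max (set vs) \<in> set vs"
    using n by (intro Max_in) (auto simp: n_def)
  then obtain i where i: "i < n" "vs ! i = Max (set vs)"
    by (auto simp: in_set_conv_nth n_def)
  define j where "j = (if Suc i = n then 0 else Suc i)"
  define h where "h = (if i = 0 then n - 1 else i - 1)"
  have jh: "j < n" "h < n" "j = Suc i mod n" "i = Suc h mod n" "j \<noteq> h" "j \<noteq> i" "h \<noteq> i"
    using i n by (auto simp: j_def h_def)
  then have edges: "E (vs ! i) (vs ! j)" "E (vs ! i) (vs ! h)"
    using adj i(1) by blast+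
  have "vs ! j \<noteq> vs ! h" "vs ! j \<noteq> vs ! i" "vs ! h \<noteq> vs ! i"
    using \<open>distinct vs\<close> jh i(1) by (simp_all add: nth_eq_iff_index_eq n_def)
  moreover have "vs ! j \<le> vs ! i" "vs ! h \<le> vs ! i"
    using i jh by (simp_all add: n_def)
  ultimately have lower: "vs ! j < vs ! i" "vs ! h < vs ! i"
    by simp_all
  have "vs ! i \<in> W" "vs ! j \<in> W" "vs ! h \<in> W"
    using \<open>set vs \<subseteq> W\<close> i(1) jh by (auto simp: n_def)
  with edges lower have "vs ! j = vs ! h"
    using assms unfolding at_most_one_lower_neighbour_def by blast
  with \<open>vs ! j \<noteq> vs ! h\<close> show False ..
qed

definition phi3_certified :: "'a::linorder set \<Rightarrow> ('a \<Rightarrow> 'a \<Rightarrow> bool) \<Rightarrow> nat \<Rightarrow> bool" where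
  "phi3_certified V E t \<longleftrightarrow>
     has_disjoint_triangles V E t \<and> (\<exists>D\<subseteq>V. card D = t \<and> at_most_one_lower_neighbour (V - D) E)"

lemma has_disjoint_triangles_le_card_decycling_set3:
  assumes "has_disjoint_triangles V E t" "decycling_set3 V E D" "finite V" "irreflp E"
  shows "t \<le> card D"
proof -
  obtain \<T> where \<T>: "finite \<T>" "card \<T> = t" "pairwise disjnt \<T>" "\<And>T. T \<in> \<T> \<Longrightarrow> T \<subseteq> V \<and> triangle E T"
    using assms(1) by (auto simp: has_disjoint_triangles_def)
  have D: "D \<subseteq> V" "ternary (V - D) E"
    using assms(2) by (simp_all add: decycling_set3_def)
  have "\<exists>d. d \<in> T \<inter> D" if "T \<in> \<T>" for T
  proof (rule ccontr)
    assume "\<nexists>d. d \<in> T \<inter> D"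
    then have "T \<subseteq> V - D"
      using \<T>(4)[OF that] by blast
    then show False
      using triangle_not_ternary \<T>(4)[OF that] assms(4) D(2) by blast
  qed
  then obtain f where f: "\<And>T. T \<in> \<T> \<Longrightarrow> f T \<in> T \<inter> D"
    by metis
  have "inj_on f \<T>"
  proof (rule inj_onI)
    fix T T' assume "T \<in> \<T>" "T' \<in> \<T>" "f T = f T'"
    then have "\<not> disjnt T T'"
      using f by (metis IntE disjnt_iff)
    with \<T>(3) \<open>T \<in> \<T>\<close> \<open>T' \<in> \<T>\<close> show "T = T'"
      by (meson pairwiseD)
  qed
  then have "card \<T> \<le> card D"
    using f assms(3) D(1) by (intro card_inj_on_le) (auto intro: finite_subset)
  with \<T>(2) show ?thesis
    by simp
qed

lemma phi3_eq_if_certified: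
  assumes "simple_graph V E" "phi3_certified V E t"
  shows "phi3 V E = t"
  unfolding phi3_def
proof (rule Least_equality)
  obtain D where "D \<subseteq> V" "card D = t" "at_most_one_lower_neighbour (V - D) E"
    using assms(2) by (auto simp: phi3_certified_def)
  then show "\<exists>D. decycling_set3 V E D \<and> card D = t"
    by (auto simp: decycling_set3_def ternary_def no_induced_cycle_if_at_most_one_lower_neighbour)
next
  fix k assume "\<exists>D. decycling_set3 V E D \<and> card D = k"
  then obtain D where "decycling_set3 V E D" "card D = k"
    by blast
  moreover have "has_disjoint_triangles V E t" "finite V" "irreflp E"
    using assms simple_graph_symp_irreflp by (auto simp: phi3_certified_def simple_graph_def)
  ultimately show "t \<le> k"
    using has_disjoint_triangles_le_card_decycling_set3 by blast
qed

lemma has_disjoint_triangles_join_by_edge: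
  assumes "has_disjoint_triangles A E t" "has_disjoint_triangles B F s" "A \<inter> B = {}"
  shows "has_disjoint_triangles (A \<union> B) (join_by_edge E F p i) (t + s)"
proof -
  obtain \<T>\<^sub>A \<T>\<^sub>B where
    A: "finite \<T>\<^sub>A" "card \<T>\<^sub>A = t" "pairwise disjnt \<T>\<^sub>A" "\<forall>T\<in>\<T>\<^sub>A. T \<subseteq> A \<and> triangle E T" and
    B: "finite \<T>\<^sub>B" "card \<T>\<^sub>B = s" "pairwise disjnt \<T>\<^sub>B" "\<forall>T\<in>\<T>\<^sub>B. T \<subseteq> B \<and> triangle F T"
    using assms(1,2) by (auto simp: has_disjoint_triangles_def)
  have cross: "disjnt T T'" if "T \<in> \<T>\<^sub>A" "T' \<in> \<T>\<^sub>B" for T T'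
    using A(4) B(4) that assms(3) unfolding disjnt_def by blast
  have "T \<noteq> {}" if "T \<in> \<T>\<^sub>A" for T
    using A(4) that by (auto simp: triangle_def)
  then have "\<T>\<^sub>A \<inter> \<T>\<^sub>B = {}"
    using cross by fastforce
  moreover have "pairwise disjnt (\<T>\<^sub>A \<union> \<T>\<^sub>B)"
    using A(3) B(3) cross unfolding pairwise_def by (metis Un_iff disjnt_sym)
  moreover have "triangle (join_by_edge E F p i) T" if "triangle E T \<or> triangle F T" for T
    using that by (auto simp: triangle_def join_by_edge_def)
  ultimately show ?thesis
    unfolding has_disjoint_triangles_def using A B
    by (intro exI[of _ "\<T>\<^sub>A \<union> \<T>\<^sub>B"]) (auto simp: card_Un_disjoint)
qed

lemma at_most_one_lower_neighbour_join_by_edge: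
  assumes lower_A: "at_most_one_lower_neighbour A' E" and lower_B: "at_most_one_lower_neighbour B' F"
    and "A' \<subseteq> A" "B' \<subseteq> B" "simple_graph A E" "simple_graph B F" "p \<in> A" "i \<in> B"
    and below: "\<And>a b. a \<in> A \<Longrightarrow> b \<in> B \<Longrightarrow> a < b" and least: "\<And>b. b \<in> B \<Longrightarrow> i \<le> b"
  shows "at_most_one_lower_neighbour (A' \<union> B') (join_by_edge E F p i)"
  unfolding at_most_one_lower_neighbour_def
proof (intro ballI impI)
  fix v u w assume v: "v \<in> A' \<union> B'" and u: "u \<in> A' \<union> B'" and w: "w \<in> A' \<union> B'"
    and edges: "join_by_edge E F p i v u" "join_by_edge E F p i v w" and lower: "u < v" "w < v"
  have EA: "E x y \<Longrightarrow> x \<in> A \<and> y \<in> A" and FB: "F x y \<Longrightarrow> x \<in> B \<and> y \<in> B" for x y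
    using assms(5,6) by (auto simp: simple_graph_def)
  have "A \<inter> B = {}"
    using below by fastforce
  show "u = w"
  proof (cases "v \<in> A")
    case True
    have "E v x" if "join_by_edge E F p i v x" "x < v" for x
      using that True \<open>i \<in> B\<close> below[OF True \<open>i \<in> B\<close>] \<open>A \<inter> B = {}\<close> FB
      by (auto simp: join_by_edge_def)
    then have "E v u" "E v w"
      using edges lower by blast+
    moreover have "u \<in> A'" "w \<in> A'"
      using u w EA calculation \<open>A \<inter> B = {}\<close> assms(4) by blast+
    ultimately show ?thesis
      using lower_A v True lower \<open>A \<inter> B = {}\<close> assms(4)
      unfolding at_most_one_lower_neighbour_def by blast
  next
    case False
    then have "v \<in> B'" "v \<in> B"
      using v assms(3,4) by blast+
    show ?thesis
    proof (cases "v = i")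
      case True
      have "x = p" if "join_by_edge E F p i v x" "x < v" for x
        using that True False EA FB least[of x] by (auto simp: join_by_edge_def)
      then show ?thesis
        using edges lower by blast
    next
      case False
      have "F v x" if "join_by_edge E F p i v x" for x
        using that False \<open>v \<notin> A\<close> \<open>p \<in> A\<close> EA by (auto simp: join_by_edge_def)
      then have "F v u" "F v w"
        using edges by blast+
      moreover have "u \<in> B'" "w \<in> B'"
        using u w FB calculation \<open>A \<inter> B = {}\<close> assms(3) by blast+
      ultimately show ?thesis
        using lower_B \<open>v \<in> B'\<close> lower unfolding at_most_one_lower_neighbour_def by blast
    qed
  qed
qed

lemma phi3_certified_join_by_edge:
  assumes "phi3_certified A E t" "phi3_certified B F s" "simple_graph A E" "simple_graph B F"
    and "p \<in> A" "i \<in> B" "\<And>a b. a \<in> A \<Longrightarrow> b \<in> B \<Longrightarrow> a < b" "\<And>b. b \<in> B \<Longrightarrow> i \<le> b"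
  shows "phi3_certified (A \<union> B) (join_by_edge E F p i) (t + s)"
proof -
  have "A \<inter> B = {}"
    using assms(7) by fastforce
  obtain D\<^sub>A D\<^sub>B where "D\<^sub>A \<subseteq> A" "card D\<^sub>A = t" "at_most_one_lower_neighbour (A - D\<^sub>A) E"
    and "D\<^sub>B \<subseteq> B" "card D\<^sub>B = s" "at_most_one_lower_neighbour (B - D\<^sub>B) F"
    using assms(1,2) by (auto simp: phi3_certified_def)
  moreover have "finite D\<^sub>A" "finite D\<^sub>B"
    using calculation assms(3,4) by (auto simp: simple_graph_def intro: finite_subset)
  moreover have "A \<union> B - (D\<^sub>A \<union> D\<^sub>B) = (A - D\<^sub>A) \<union> (B - D\<^sub>B)" "D\<^sub>A \<inter> D\<^sub>B = {}"
    using \<open>A \<inter> B = {}\<close> calculation by blast+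
  ultimately have "\<exists>D\<subseteq>A \<union> B. card D = t + s
      \<and> at_most_one_lower_neighbour (A \<union> B - D) (join_by_edge E F p i)"
    using \<open>A \<inter> B = {}\<close> assms(3-8) at_most_one_lower_neighbour_join_by_edge[of "A - D\<^sub>A" E "B - D\<^sub>B" F A B]
    by (intro exI[of _ "D\<^sub>A \<union> D\<^sub>B"]) (auto simp: card_Un_disjoint)
  with assms(1,2) \<open>A \<inter> B = {}\<close> show ?thesis
    by (auto simp: phi3_certified_def has_disjoint_triangles_join_by_edge)
qed

lemma indep_poly_join_by_edge:
  assumes "simple_graph A E" "simple_graph B F" "A \<inter> B = {}" "p \<in> A" "i \<in> B"
  shows "indep_poly (A \<union> B) (join_by_edge E F p i) x
           = indep_poly (A - {p}) E x * indep_poly B F x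
             + (indep_poly A E x - indep_poly (A - {p}) E x) * indep_poly (B - {i}) F x"
    and "indep_poly (A \<union> B - {p}) (join_by_edge E F p i) x = indep_poly (A - {p}) E x * indep_poly B F x"
    and "indep_poly (A \<union> B - {i}) (join_by_edge E F p i) x = indep_poly A E x * indep_poly (B - {i}) F x"
proof -
  let ?G = "join_by_edge E F p i"
  have "finite A" "finite B" and EA: "E x y \<Longrightarrow> x \<in> A \<and> y \<in> A" and FB: "F x y \<Longrightarrow> x \<in> B \<and> y \<in> B"
    for x y using assms(1,2) by (auto simp: simple_graph_def)
  have "symp ?G" "irreflp ?G"
    using simple_graph_join_by_edge[OF assms] by (simp_all add: simple_graph_symp_irreflp)
  have on_A: "indep_poly S ?G x = indep_poly S E x" if "S \<subseteq> A" for S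
    using that assms(3,5) FB by (intro indep_poly_cong) (auto simp: join_by_edge_def)
  have on_B: "indep_poly S ?G x = indep_poly S F x" if "S \<subseteq> B" for S
    using that assms(3,4) EA by (intro indep_poly_cong) (auto simp: join_by_edge_def)
  have cross: "?G a b \<longleftrightarrow> a = p \<and> b = i" if "a \<in> A" "b \<in> B" for a b
    using that assms(3-5) EA FB by (auto simp: join_by_edge_def)
  then have no_cross: "\<not> ?G a b \<and> \<not> ?G b a" if "a \<in> A" "b \<in> B" "a \<noteq> p \<or> b \<noteq> i" for a b
    using that \<open>symp ?G\<close> by (metis sympD)
  show "indep_poly (A \<union> B) ?G x
          = indep_poly (A - {p}) E x * indep_poly B F x
            + (indep_poly A E x - indep_poly (A - {p}) E x) * indep_poly (B - {i}) F x"
    using indep_poly_Un_bridge[OF \<open>finite A\<close> \<open>finite B\<close> assms(3-5) \<open>symp ?G\<close> \<open>irreflp ?G\<close> cross, of x]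
    by (simp add: on_A on_B)
  have "A \<union> B - {p} = (A - {p}) \<union> B" "A \<union> B - {i} = A \<union> (B - {i})"
    using assms(3-5) by blast+
  moreover have "indep_poly ((A - {p}) \<union> B) ?G x = indep_poly (A - {p}) ?G x * indep_poly B ?G x"
    "indep_poly (A \<union> (B - {i})) ?G x = indep_poly A ?G x * indep_poly (B - {i}) ?G x"
    using \<open>finite A\<close> \<open>finite B\<close> assms(3) no_cross by (intro indep_poly_Un; auto)+
  ultimately show "indep_poly (A \<union> B - {p}) ?G x = indep_poly (A - {p}) E x * indep_poly B F x"
    and "indep_poly (A \<union> B - {i}) ?G x = indep_poly A E x * indep_poly (B - {i}) F x"
    by (simp_all add: on_A on_B)
qed

definition realises :: "'a::linorder set \<Rightarrow> ('a \<Rightarrow> 'a \<Rightarrow> bool) \<Rightarrow> 'a \<Rightarrow> nat \<Rightarrow> int \<Rightarrow> int \<Rightarrow> bool" where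
  "realises V E p t Q P \<longleftrightarrow> simple_graph V E \<and> connected_graph V E \<and> phi3_certified V E t \<and> p \<in> V
     \<and> indep_poly V E (-1) = Q \<and> indep_poly (V - {p}) E (-1) = P"

lemma realises_join_by_edge:
  assumes A: "realises A E p t Q P" and B: "realises B F i s R R'"
    and below: "\<And>a b. a \<in> A \<Longrightarrow> b \<in> B \<Longrightarrow> a < b" and least: "\<And>b. b \<in> B \<Longrightarrow> i \<le> b"
  shows "realises (A \<union> B) (join_by_edge E F p i) p (t + s) (P * R + (Q - P) * R') (P * R)"
    and "realises (A \<union> B) (join_by_edge E F p i) i (t + s) (P * R + (Q - P) * R') (Q * R')"
proof -
  have "A \<inter> B = {}"
    using below by fastforce
  have graphs: "simple_graph A E" "simple_graph B F" "p \<in> A" "i \<in> B"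
    using A B by (simp_all add: realises_def)
  note indep_values = indep_poly_join_by_edge[OF graphs(1,2) \<open>A \<inter> B = {}\<close> graphs(3,4), of "-1 :: int"]
  show "realises (A \<union> B) (join_by_edge E F p i) p (t + s) (P * R + (Q - P) * R') (P * R)"
    and "realises (A \<union> B) (join_by_edge E F p i) i (t + s) (P * R + (Q - P) * R') (Q * R')"
    using A B graphs below least \<open>A \<inter> B = {}\<close>
    by (simp_all add: realises_def indep_values simple_graph_join_by_edge connected_graph_join_by_edge
        phi3_certified_join_by_edge)
qed

lemma realises_vertex: "realises {v} (complete_graph_on {v}) v 0 0 1"
proof -
  have "phi3_certified {v} (complete_graph_on {v}) 0"
    unfolding phi3_certified_def has_disjoint_triangles_def at_most_one_lower_neighbour_def
    by (intro conjI exI[of _ "{}"]) auto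
  then show ?thesis
    by (simp add: realises_def simple_graph_complete_graph_on connected_graph_complete_graph_on
        indep_poly_complete_graph_on indep_poly_empty)
qed

lemma realises_triangle:
  fixes a b c :: "'a::linorder"
  assumes "a < b" "b < c"
  shows "realises {a, b, c} (complete_graph_on {a, b, c}) a 1 (-2) (-1)"
proof -
  let ?G = "complete_graph_on {a, b, c}"
  have "a \<noteq> b" "a \<noteq> c" "b \<noteq> c"
    using assms by auto
  then have "triangle ?G {a, b, c}"
    by (auto simp: triangle_def complete_graph_on_def)
  then have "has_disjoint_triangles {a, b, c} ?G 1"
    unfolding has_disjoint_triangles_def by (intro exI[of _ "{{a, b, c}}"]) auto
  moreover have "at_most_one_lower_neighbour ({a, b, c} - {b}) ?G"
    using assms by (auto simp: at_most_one_lower_neighbour_def)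
  ultimately have "phi3_certified {a, b, c} ?G 1"
    unfolding phi3_certified_def by (intro conjI exI[of _ "{b}"]) auto
  moreover have "{a, b, c} - {a} = {b, c}"
    using assms by auto
  moreover have "indep_poly {b, c} ?G (-1 :: int) = -1"
    using assms indep_poly_clique[of "{b, c}" ?G "-1 :: int"]
    by (auto simp: complete_graph_on_def irreflp_def)
  ultimately show ?thesis
    using \<open>a \<noteq> b\<close> \<open>a \<noteq> c\<close> \<open>b \<noteq> c\<close>
    by (simp add: realises_def simple_graph_complete_graph_on connected_graph_complete_graph_on
        indep_poly_complete_graph_on)
qed

lemma realises_paw:
  fixes a b c d :: "'a::linorder"
  assumes "a < b" "b < c" "c < d"
  shows "realises {a, b, c, d}
           (join_by_edge (complete_graph_on {a}) (complete_graph_on {b, c, d}) a b) a 1 (-1) (-2)"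
proof -
  have "{a} \<union> {b, c, d} = {a, b, c, d}"
    by auto
  moreover have "realises ({a} \<union> {b, c, d})
      (join_by_edge (complete_graph_on {a}) (complete_graph_on {b, c, d}) a b)
      a (0 + 1) (1 * -2 + (0 - 1) * -1) (1 * -2)"
    by (rule realises_join_by_edge(1)[OF realises_vertex realises_triangle[OF assms(2,3)]])
      (use assms in auto)
  ultimately show ?thesis
    by simp
qed

(* Rooted graphs live on an initial segment {..<n}, so that the next gadget can be placed
   on the fresh vertices {n..<m} above them. *)
definition realisable :: "nat \<Rightarrow> int \<Rightarrow> int \<Rightarrow> bool" where
  "realisable t Q P \<longleftrightarrow> (\<exists>(n :: nat) E p. realises {..<n} E p t Q P)"

lemma realisable_attach:
  assumes "realisable t Q P" and gadget: "\<And>n :: nat. \<exists>m G. realises {n..<m} G n s R R'"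
  shows "realisable (t + s) (P * R + (Q - P) * R') (P * R)"
    and "realisable (t + s) (P * R + (Q - P) * R') (Q * R')"
proof -
  obtain n :: nat and E p where A: "realises {..<n} E p t Q P"
    using assms(1) by (auto simp: realisable_def)
  obtain m G where B: "realises {n..<m} G n s R R'"
    using gadget by blast
  then have "{..<n} \<union> {n..<m} = {..<m}"
    by (auto simp: realises_def)
  moreover have "a < b" "n \<le> b" if "a \<in> {..<n}" "b \<in> {n..<m}" for a b
    using that by auto
  ultimately have "realises {..<m} (join_by_edge E G p n) p (t + s) (P * R + (Q - P) * R') (P * R)"
    "realises {..<m} (join_by_edge E G p n) n (t + s) (P * R + (Q - P) * R') (Q * R')"
    using realises_join_by_edge[OF A B] by simp_all
  then show "realisable (t + s) (P * R + (Q - P) * R') (P * R)"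
    and "realisable (t + s) (P * R + (Q - P) * R') (Q * R')"
    unfolding realisable_def by blast+
qed

lemma realisable_pendant:
  assumes "realisable t Q P" shows "realisable t (Q - P) Q"
proof -
  have "\<exists>m G. realises {n..<m} G n 0 0 1" for n :: nat
    using realises_vertex[of n] by (metis atLeastLessThan_singleton)
  from realisable_attach(2)[OF assms this] show ?thesis
    by simp
qed

lemma realisable_triangle:
  assumes "realisable t Q P" shows "realisable (Suc t) (- P - Q) (- 2 * P)"
proof -
  have "\<exists>m G. realises {n..<m} G n 1 (-2) (-1)" for n :: nat
  proof -
    have "{n..<n + 3} = {n, n + 1, n + 2}"
      by auto
    then have "realises {n..<n + 3} (complete_graph_on {n, n + 1, n + 2}) n 1 (-2) (-1)"
      using realises_triangle[of n "n + 1" "n + 2"] by simp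
    then show ?thesis
      by blast
  qed
  from realisable_attach(1)[OF assms this] show ?thesis
    by (simp add: algebra_simps)
qed

lemma realisable_paw:
  assumes "realisable t Q P" shows "realisable (Suc t) (P - 2 * Q) (- P)"
proof -
  have "\<exists>m G. realises {n..<m} G n 1 (-1) (-2)" for n :: nat
  proof -
    have "{n..<n + 4} = {n, n + 1, n + 2, n + 3}"
      by auto
    then have "realises {n..<n + 4}
        (join_by_edge (complete_graph_on {n}) (complete_graph_on {n + 1, n + 2, n + 3}) n (n + 1))
        n 1 (-1) (-2)"
      using realises_paw[of n "n + 1" "n + 2" "n + 3"] by simp
    then show ?thesis
      by blast
  qed
  from realisable_attach(1)[OF assms this] show ?thesis
    by (simp add: algebra_simps)
qed

lemma realisable_uminus:
  assumes "realisable t Q P" shows "realisable t (- Q) (- P)"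
  \<comment> \<open>(Q, P) to (Q - P, Q) to (-P, Q - P) to (-Q, -P)\<close>
  using realisable_pendant[OF realisable_pendant[OF realisable_pendant[OF assms]]] by simp

lemma realisable_double:
  assumes "realisable t Q P" shows "realisable (Suc t) (2 * Q) P"
  \<comment> \<open>(Q, P) to (Q - P, Q) to (P - 2Q, -2Q) to (P, P - 2Q) to (2Q, P)\<close>
  using realisable_pendant[OF realisable_pendant[OF realisable_triangle[OF realisable_pendant[OF assms]]]]
  by simp

lemma realisable_vertex: "realisable 0 0 1"
proof -
  have "{..<1 :: nat} = {0}"
    by auto
  with realises_vertex[of "0 :: nat"] show ?thesis
    unfolding realisable_def by metis
qed

lemma realisable_positive:
  assumes "1 \<le> q" "q \<le> 2 ^ t"
  shows "realisable t q 1"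
  using assms
proof (induction t arbitrary: q)
  case 0
  then have "q = 1"
    by simp
  then show ?case
    using realisable_uminus[OF realisable_pendant[OF realisable_pendant[OF realisable_vertex]]] by simp
next
  case (Suc t)
  define k where "k = (q + 1) div 2"
  have "(2 :: int) ^ Suc t = 2 * 2 ^ t"
    by simp
  then have "1 \<le> k" "k \<le> 2 ^ t" "q = 2 * k \<or> q = 2 * k - 1"
    using Suc.prems unfolding k_def by presburger+
  then have "realisable t k 1"
    using Suc.IH by blast
  \<comment> \<open>q = 2k - 1 is the paw applied to (-k, -1)\<close>
  then show ?case
    using realisable_double realisable_paw[OF realisable_uminus] \<open>q = 2 * k \<or> q = 2 * k - 1\<close>
    by fastforce
qed

theorem corollary2p2:
  fixes k :: nat and q :: int
  assumes "k > 0" and "\<bar>q\<bar> \<le> 2 ^ k"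
  shows "\<exists>(V :: nat set) E. simple_graph V E \<and> connected_graph V E \<and>
           phi3 V E = k \<and> indep_poly V E (-1 :: int) = q"
proof -
  have "\<exists>P. realisable k q P"
  proof (cases q "0 :: int" rule: linorder_cases)
    case less
    then show ?thesis
      using realisable_uminus[OF realisable_positive[of "- q" k]] assms(2) by auto
  next
    case equal
    then show ?thesis
      using realisable_pendant[OF realisable_positive[of 1 k]] by auto
  next
    case greater
    then show ?thesis
      using realisable_positive[of q k] assms(2) by auto
  qed
  then obtain n :: nat and E p P where "realises {..<n} E p k q P"
    by (auto simp: realisable_def)
  then show ?thesis
    unfolding realises_def using phi3_eq_if_certified by blast
qed

end
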